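(* For every integer $m\ge0$, the following identity of rational functions in indeterminates $x,y$ holds: $$\sum_{r=0}^{m}\sum_{s=0}^{m-r}\binom{m-r+1}{s}\binom{m-s}{r}\frac{x^ry^s}{(1-x)^{r+s}(1-y)^{r+s}}=\frac{1-x^{m+2}y^{m+2}-x(1-x^{m+1}y^{m+1})-(1-xy)y^{m+1}}{(1-xy)(1-x)^{m+1}(1-y)^{m+1}}.$$ *)

theory Defs
  imports Complex_Main
begin

end

theory Submission
  imports Defs
begin

(*
  Put F(a,b) = sum over r + s <= min a b of C(a-r,s) C(b-s,r) X^r Y^s. Pascal's rule applied
  to either binomial factor gives F(n+2,n+1) = F(n+1,n+1) + Y F(n+1,n) and
  F(n+1,n+1) = F(n+1,n) + X F(n,n) + Y^(n+1), with F(a,0) = 1. The left-hand side of the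
  identity is F(m+1,m) at X = x/u, Y = y/u, where u = (1-x)(1-y); at this substitution the two
  recurrences are solved by u^n F(n,n) = sum_(k<=n) (xy)^k and
  u^(n+1) F(n+1,n) = sum_(k<=n+1) (xy)^k - x sum_(k<=n) (xy)^k - y^(n+1), by simultaneous
  induction. Summing the geometric series gives the right-hand side.
*)

(* The truncation matters: for r = 0 and b < s <= a the truncated subtraction b - s would
   otherwise contribute a spurious C(a,s). *)
definition binom_pair :: "nat \<Rightarrow> nat \<Rightarrow> nat \<Rightarrow> nat \<Rightarrow> nat" where
  "binom_pair a b r s =
     (if r + s \<le> a \<and> r + s \<le> b then (a - r choose s) * (b - s choose r) else 0)"

lemma binom_pair_eq_0: "b < r + s \<Longrightarrow> binom_pair a b r s = 0"
  by (simp add: binom_pair_def)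

lemma binom_pair_0_right: "binom_pair a 0 r s = (if r = 0 \<and> s = 0 then 1 else 0)"
  by (simp add: binom_pair_def)

lemma binom_pair_pascal_s_0:
  "b < a \<Longrightarrow> binom_pair (Suc a) (Suc b) r 0 = binom_pair a (Suc b) r 0"
  by (simp add: binom_pair_def)

lemma binom_pair_pascal_s_Suc:
  assumes "b < a"
  shows "binom_pair (Suc a) (Suc b) r (Suc s) = binom_pair a (Suc b) r (Suc s) + binom_pair a b r s"
proof (cases "r + s \<le> b")
  case True
  then have "Suc a - r = Suc (a - r)" using assms by simp
  then show ?thesis
    using True assms by (simp add: binom_pair_def add_mult_distrib)
next
  case False
  then show ?thesis by (simp add: binom_pair_def)
qed

lemma binom_pair_pascal_r_Suc:
  "binom_pair (Suc a) (Suc b) (Suc r) s = binom_pair (Suc a) b (Suc r) s + binom_pair a b r s"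
proof (cases "r + s \<le> a \<and> r + s \<le> b")
  case True
  then have "Suc b - s = Suc (b - s)" by arith
  then show ?thesis
    using True by (auto simp add: binom_pair_def add_mult_distrib2)
next
  case False
  then show ?thesis by (auto simp add: binom_pair_def)
qed

lemma binom_pair_pascal_r_0:
  "b \<le> a \<Longrightarrow> binom_pair (Suc a) (Suc b) 0 s
     = binom_pair (Suc a) b 0 s + (if s = Suc b then Suc a choose Suc b else 0)"
  by (simp add: binom_pair_def)

lemma sum_atMost_power_shift:
  fixes p q d :: "nat \<Rightarrow> 'a::comm_semiring_1"
  assumes "p 0 = q 0 + e" and "\<And>s. p (Suc s) = q (Suc s) + d s" and "d K = 0"
  shows "(\<Sum>s\<le>K. p s * z ^ s) = (\<Sum>s\<le>K. q s * z ^ s) + z * (\<Sum>s\<le>K. d s * z ^ s) + e"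
proof (cases K)
  case 0
  then show ?thesis using assms by (simp add: algebra_simps)
next
  case (Suc L)
  have "(\<Sum>s\<le>K. p s * z ^ s)
      = q 0 + e + (\<Sum>s\<le>L. q (Suc s) * z ^ Suc s) + z * (\<Sum>s\<le>L. d s * z ^ s)"
    unfolding Suc sum.atMost_Suc_shift using assms(1,2)
    by (simp add: algebra_simps sum.distrib sum_distrib_left)
  moreover have "(\<Sum>s\<le>K. d s * z ^ s) = (\<Sum>s\<le>L. d s * z ^ s)"
    using assms(3) Suc by simp
  ultimately show ?thesis
    unfolding Suc sum.atMost_Suc_shift[of _ L] by (simp add: algebra_simps)
qed

(* K only bounds the summation range; for b <= min a K its value does not depend on K
   (binom_pair_poly_eq_triangle_sum). *)
definition binom_pair_poly :: "nat \<Rightarrow> nat \<Rightarrow> nat \<Rightarrow> 'a::comm_semiring_1 \<Rightarrow> 'a \<Rightarrow> 'a" where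
  "binom_pair_poly K a b X Y = (\<Sum>r\<le>K. \<Sum>s\<le>K. of_nat (binom_pair a b r s) * X ^ r * Y ^ s)"

lemma binom_pair_poly_swap_order:
  "binom_pair_poly K a b X Y = (\<Sum>r\<le>K. (\<Sum>s\<le>K. of_nat (binom_pair a b r s) * Y ^ s) * X ^ r)"
  by (simp add: binom_pair_poly_def sum_distrib_left sum_distrib_right mult_ac)

lemma binom_pair_poly_0_right: "binom_pair_poly K a 0 X Y = 1"
proof -
  have "of_nat (binom_pair a 0 r s) * X ^ r * Y ^ s = (if r = 0 then if s = 0 then 1 else 0 else 0)"
    for r s
    by (simp add: binom_pair_0_right)
  then show ?thesis
    by (simp add: binom_pair_poly_def if_distrib[symmetric] sum.If_cases)
qed

lemma binom_pair_poly_pascal_Y: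
  assumes "b < a" and "b < K"
  shows "binom_pair_poly K (Suc a) (Suc b) X Y
    = binom_pair_poly K a (Suc b) X Y + Y * binom_pair_poly K a b X Y"
proof -
  have "(\<Sum>s\<le>K. of_nat (binom_pair (Suc a) (Suc b) r s) * X ^ r * Y ^ s)
      = (\<Sum>s\<le>K. of_nat (binom_pair a (Suc b) r s) * X ^ r * Y ^ s)
        + Y * (\<Sum>s\<le>K. of_nat (binom_pair a b r s) * X ^ r * Y ^ s)" for r
    by (rule sum_atMost_power_shift[where e = 0, simplified])
      (use assms in \<open>simp_all add: binom_pair_pascal_s_0 binom_pair_pascal_s_Suc binom_pair_eq_0 distrib_right\<close>)
  then show ?thesis
    by (simp add: binom_pair_poly_def sum.distrib sum_distrib_left)
qed

lemma binom_pair_poly_pascal_X: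
  assumes "b \<le> a" and "b < K"
  shows "binom_pair_poly K (Suc a) (Suc b) X Y
    = binom_pair_poly K (Suc a) b X Y + X * binom_pair_poly K a b X Y
      + of_nat (Suc a choose Suc b) * Y ^ Suc b"
  unfolding binom_pair_poly_swap_order
proof (rule sum_atMost_power_shift)
  show "(\<Sum>s\<le>K. of_nat (binom_pair (Suc a) (Suc b) 0 s) * Y ^ s)
    = (\<Sum>s\<le>K. of_nat (binom_pair (Suc a) b 0 s) * Y ^ s) + of_nat (Suc a choose Suc b) * Y ^ Suc b"
  proof -
    have "of_nat (binom_pair (Suc a) (Suc b) 0 s) * Y ^ s = of_nat (binom_pair (Suc a) b 0 s) * Y ^ s
        + (if s = Suc b then of_nat (Suc a choose Suc b) * Y ^ Suc b else 0)" for s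
      using assms by (auto simp add: binom_pair_pascal_r_0 binom_pair_eq_0)
    then show ?thesis
      using assms by (simp add: sum.distrib)
  qed
  show "(\<Sum>s\<le>K. of_nat (binom_pair (Suc a) (Suc b) (Suc r) s) * Y ^ s)
    = (\<Sum>s\<le>K. of_nat (binom_pair (Suc a) b (Suc r) s) * Y ^ s)
      + (\<Sum>s\<le>K. of_nat (binom_pair a b r s) * Y ^ s)" for r
    by (simp add: binom_pair_pascal_r_Suc distrib_right sum.distrib)
  show "(\<Sum>s\<le>K. of_nat (binom_pair a b K s) * Y ^ s) = 0"
    using assms by (simp add: binom_pair_eq_0)
qed

lemma binom_pair_poly_eq_triangle_sum:
  assumes "b \<le> a" and "b \<le> K"
  shows "binom_pair_poly K a b X Y
    = (\<Sum>r\<le>b. \<Sum>s\<le>b - r. of_nat (a - r choose s) * of_nat (b - s choose r) * X ^ r * Y ^ s)"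
proof -
  have "binom_pair_poly K a b X Y = (\<Sum>r\<le>b. \<Sum>s\<le>K. of_nat (binom_pair a b r s) * X ^ r * Y ^ s)"
    unfolding binom_pair_poly_def
    by (rule sum.mono_neutral_right) (use assms in \<open>auto simp: binom_pair_eq_0\<close>)
  also have "\<dots> = (\<Sum>r\<le>b. \<Sum>s\<le>b - r. of_nat (a - r choose s) * of_nat (b - s choose r) * X ^ r * Y ^ s)"
    by (intro sum.cong refl sum.mono_neutral_cong_right)
      (use assms in \<open>auto simp: binom_pair_def\<close>)
  finally show ?thesis .
qed

lemma binom_pair_poly_closed_form:
  fixes x y u :: "'a::field"
  assumes u_def: "u = (1 - x) * (1 - y)" and "u \<noteq> 0" and "n \<le> K"
  shows "binom_pair_poly K n n (x / u) (y / u) = (\<Sum>k\<le>n. (x * y) ^ k) / u ^ n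
    \<and> binom_pair_poly K (Suc n) n (x / u) (y / u)
      = ((\<Sum>k\<le>Suc n. (x * y) ^ k) - x * (\<Sum>k\<le>n. (x * y) ^ k) - y ^ Suc n) / u ^ Suc n"
  using \<open>n \<le> K\<close>
proof (induction n)
  case 0
  show ?case
    using assms(1,2) by (simp add: binom_pair_poly_0_right algebra_simps)
next
  case (Suc n)
  define S where "S m = (\<Sum>k\<le>m. (x * y) ^ k)" for m
  have S_Suc: "S (Suc m) = S m + (x * y) ^ Suc m" for m
    by (simp add: S_def)
  have "n < K" and "n \<le> K" using Suc.prems by simp_all
  have IH: "binom_pair_poly K n n (x / u) (y / u) = S n / u ^ n"
    "binom_pair_poly K (Suc n) n (x / u) (y / u) = (S (Suc n) - x * S n - y ^ Suc n) / u ^ Suc n"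
    using Suc.IH \<open>n \<le> K\<close> by (simp_all add: S_def)
  have diagonal: "binom_pair_poly K (Suc n) (Suc n) (x / u) (y / u) = S (Suc n) / u ^ Suc n"
  proof -
    have "binom_pair_poly K (Suc n) (Suc n) (x / u) (y / u)
        = (S (Suc n) - x * S n - y ^ Suc n) / u ^ Suc n + x / u * (S n / u ^ n) + (y / u) ^ Suc n"
      unfolding binom_pair_poly_pascal_X[OF order.refl \<open>n < K\<close>] IH by simp
    also have "\<dots> = S (Suc n) / u ^ Suc n"
      using \<open>u \<noteq> 0\<close> by (simp add: field_simps)
    finally show ?thesis .
  qed
  have "binom_pair_poly K (Suc (Suc n)) (Suc n) (x / u) (y / u)
      = S (Suc n) / u ^ Suc n + y / u * ((S (Suc n) - x * S n - y ^ Suc n) / u ^ Suc n)"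
    unfolding binom_pair_poly_pascal_Y[OF lessI \<open>n < K\<close>] diagonal IH ..
  also have "\<dots> = (u * S (Suc n) + y * (S (Suc n) - x * S n - y ^ Suc n)) / u ^ Suc (Suc n)"
    using \<open>u \<noteq> 0\<close> by (simp add: field_simps)
  also have "u * S (Suc n) + y * (S (Suc n) - x * S n - y ^ Suc n)
      = S (Suc (Suc n)) - x * S (Suc n) - y ^ Suc (Suc n)"
    unfolding u_def S_Suc by (simp add: algebra_simps)
  finally show ?case
    using diagonal by (simp add: S_def)
qed

lemma binom_pair_poly_subdiagonal:
  fixes x y u :: "'a::field"
  assumes u_def: "u = (1 - x) * (1 - y)" and "u \<noteq> 0" and "x * y \<noteq> 1" and "n \<le> K"
  shows "binom_pair_poly K (Suc n) n (x / u) (y / u)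
    = (1 - x ^ (n + 2) * y ^ (n + 2) - x * (1 - x ^ (n + 1) * y ^ (n + 1)) - (1 - x * y) * y ^ (n + 1))
      / ((1 - x * y) * u ^ (n + 1))"
proof -
  define S where "S m = (\<Sum>k\<le>m. (x * y) ^ k)" for m
  have geometric: "(1 - x * y) * S m = 1 - x ^ Suc m * y ^ Suc m" for m
    using sum_gp_basic[of "x * y" m] by (simp add: S_def power_mult_distrib)
  have "1 - x * y \<noteq> 0"
    using \<open>x * y \<noteq> 1\<close> by simp
  have "binom_pair_poly K (Suc n) n (x / u) (y / u) = (S (Suc n) - x * S n - y ^ Suc n) / u ^ Suc n"
    using binom_pair_poly_closed_form[OF u_def \<open>u \<noteq> 0\<close> \<open>n \<le> K\<close>] by (simp add: S_def)
  also have "\<dots> = (1 - x * y) * (S (Suc n) - x * S n - y ^ Suc n) / ((1 - x * y) * u ^ Suc n)"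
    using \<open>1 - x * y \<noteq> 0\<close> by simp
  also have "(1 - x * y) * (S (Suc n) - x * S n - y ^ Suc n)
      = (1 - x * y) * S (Suc n) - x * ((1 - x * y) * S n) - (1 - x * y) * y ^ Suc n"
    by (simp add: algebra_simps)
  finally show ?thesis
    unfolding geometric by simp
qed

theorem corollary2p5:
  fixes x y :: "'a::field_char_0" and m :: nat
  assumes "x \<noteq> 1" and "y \<noteq> 1" and "x * y \<noteq> 1"
  shows "(\<Sum>r=0..m. \<Sum>s=0..m-r.
            of_nat ((m - r + 1) choose s) * of_nat ((m - s) choose r) * x ^ r * y ^ s
            / ((1 - x) ^ (r + s) * (1 - y) ^ (r + s)))
       = (1 - x ^ (m + 2) * y ^ (m + 2) - x * (1 - x ^ (m + 1) * y ^ (m + 1)) - (1 - x * y) * y ^ (m + 1))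
         / ((1 - x * y) * (1 - x) ^ (m + 1) * (1 - y) ^ (m + 1))"
proof -
  define u where "u = (1 - x) * (1 - y)"
  have "u \<noteq> 0"
    using assms by (simp add: u_def)
  have "(\<Sum>r=0..m. \<Sum>s=0..m-r.
            of_nat ((m - r + 1) choose s) * of_nat ((m - s) choose r) * x ^ r * y ^ s
            / ((1 - x) ^ (r + s) * (1 - y) ^ (r + s)))
      = (\<Sum>r\<le>m. \<Sum>s\<le>m - r.
            of_nat (Suc m - r choose s) * of_nat (m - s choose r) * (x / u) ^ r * (y / u) ^ s)"
    by (intro sum.cong)
      (auto simp: atLeast0AtMost u_def Suc_diff_le power_divide power_add power_mult_distrib)
  also have "\<dots> = binom_pair_poly m (Suc m) m (x / u) (y / u)"
    by (rule binom_pair_poly_eq_triangle_sum[symmetric]) simp_all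
  also have "\<dots> = (1 - x ^ (m + 2) * y ^ (m + 2) - x * (1 - x ^ (m + 1) * y ^ (m + 1))
      - (1 - x * y) * y ^ (m + 1)) / ((1 - x * y) * u ^ (m + 1))"
    using binom_pair_poly_subdiagonal[OF u_def \<open>u \<noteq> 0\<close> \<open>x * y \<noteq> 1\<close> order.refl] .
  finally show ?thesis
    by (simp add: u_def power_mult_distrib mult.assoc)
qed

end
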